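(* Let $\Lambda$ be a cohomology algebra of $b^+=1$ type with $I_T=0$ and $\Gamma\cong\langle1\rangle\oplus n\langle-1\rangle$, $0\le n\le 9$, with orthogonal basis $\{H,E_1,\dots,E_n\}$ of $\Lambda^2$, $H\cdot H=1$, $E_i\cdot E_i=-1$. Let $A=aH-\sum_{i=1}^n b_iE_i\ne0$ be reduced with $A\cdot A\ge0$. Then $c_0=3H-\sum_{i=1}^nE_i$ is an adjunction class and $$h(A)=h_{c_0}(A)=\frac{(a-1)(a-2)-\sum_{i=1}^n b_i(b_i-1)}{2}=\binom{a-1}{2}-\sum_{i=1}^n\binom{b_i}{2}.$$
   Context: Notation: $\Lambda$ a cohomology algebra (graded commutative algebra over $\mathbb{Z}$, free of finite rank in each degree, $p:\Lambda^4\cong\mathbb{Z}$ with perfect pairings $\Lambda^i\times\Lambda^{4-i}\to\mathbb{Z}$); $\Gamma(x,y)=x\cdot y=p(xy)$ on $\Lambda^2$, signature $\sigma$; $I_T\subseteq\Lambda^2$ is the subgroup generated by products of elements of $\Lambda^1$. Characteristic: $c\cdot A\equiv A\cdot A\pmod 2$ for all $A$. Since $I_T=0$, the adjunction classes are the characteristic classes $c$ with $c\cdot c>\sigma(\Lambda)$ (equivalently $c\cdot c\ge\sigma+8$). $h_c(A)=1+\frac{A\cdot A-|c\cdot A|}{2}$ for $A\ne0$, $h_c(0)=0$; $h(A)=\max_c h_c(A)$ over adjunction classes. $A=aH-\sum b_iE_i$ is reduced if $b_1\ge b_2\ge\dots\ge b_n\ge0$ and $a\ge b_1$ if $n=1$,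 $a\ge b_1+b_2$ if $n=2$, $a\ge b_1+b_2+b_3$ if $n\ge3$ ($a\ge0$ if $n=0$). *)

theory Defs
  imports Complex_Main
begin

text \<open>A class is a pair (a, b) with b a list of length n, standing for
  a H - (b!0) E_1 - ... - (b!(n-1)) E_n.  Since I_T = 0, only the
  intersection lattice enters the definitions of adjunction classes and h.\<close>

type_synonym cls = "int \<times> int list"

definition cls_in :: "nat \<Rightarrow> cls \<Rightarrow> bool" where
  "cls_in n A \<longleftrightarrow> length (snd A) = n"

definition dot :: "cls \<Rightarrow> cls \<Rightarrow> int" where
  "dot A B = fst A * fst B - sum_list (map2 (*) (snd A) (snd B))"

definition zero_cls :: "nat \<Rightarrow> cls" where
  "zero_cls n = (0, replicate n 0)"

definition signature :: "nat \<Rightarrow> int" where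
  "signature n = 1 - int n"

definition characteristic :: "nat \<Rightarrow> cls \<Rightarrow> bool" where
  "characteristic n c \<longleftrightarrow> cls_in n c \<and>
     (\<forall>A. cls_in n A \<longrightarrow> dot c A mod 2 = dot A A mod 2)"

definition adjunction_class :: "nat \<Rightarrow> cls \<Rightarrow> bool" where
  "adjunction_class n c \<longleftrightarrow> characteristic n c \<and> dot c c > signature n"

definition h_c :: "nat \<Rightarrow> cls \<Rightarrow> cls \<Rightarrow> int" where
  "h_c n c A = (if A = zero_cls n then 0 else 1 + (dot A A - \<bar>dot c A\<bar>) div 2)"

definition h :: "nat \<Rightarrow> cls \<Rightarrow> int" where
  "h n A = Sup {h_c n c A | c. adjunction_class n c}"

definition reduced :: "nat \<Rightarrow> cls \<Rightarrow> bool" where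
  "reduced n A \<longleftrightarrow> cls_in n A \<and>
     (let a = fst A; b = snd A in
       sorted_wrt (\<ge>) b \<and> (\<forall>x\<in>set b. x \<ge> 0) \<and>
       (if n = 0 then a \<ge> 0
        else if n = 1 then a \<ge> b!0
        else if n = 2 then a \<ge> b!0 + b!1
        else a \<ge> b!0 + b!1 + b!2))"

end

theory Submission
  imports Defs "HOL-Library.More_List"
begin

text \<open>Write an adjunction class as \<open>c = \<alpha>H - \<Sum> \<beta>\<^sub>i E\<^sub>i\<close>. Being characteristic
  forces \<open>\<alpha>\<close> and all \<open>\<beta>\<^sub>i\<close> to be odd, so \<open>c\<cdot>c - \<sigma>\<close> is divisible by 8 and
  \<open>c\<cdot>c > \<sigma>\<close> becomes \<open>\<alpha>\<^sup>2 \<ge> \<Sum> \<beta>\<^sub>i\<^sup>2 + 9 - n\<close>. For reduced \<open>A\<close> we have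
  \<open>|c\<cdot>A| \<ge> |\<alpha>|a - \<Sum> |\<beta>\<^sub>i| b\<^sub>i\<close>, and the odd weights \<open>x\<^sub>i = |\<beta>\<^sub>i|\<close> satisfy the
  prefix bounds \<open>\<Sum>\<^sub>i\<^sub><\<^sub>k (x\<^sub>i - 1) \<le> min k 3 \<cdot> (|\<alpha>| - 3)\<close>: by parity for \<open>k \<le> 2\<close> and
  by Cauchy-Schwarz for \<open>3 \<le> k \<le> 9\<close>. Since \<open>b\<close> is decreasing and \<open>a \<ge> b\<^sub>1 + b\<^sub>2 + b\<^sub>3\<close>,
  Abel summation turns these bounds into \<open>|c\<cdot>A| \<ge> 3a - \<Sum> b\<^sub>i = c\<^sub>0\<cdot>A \<ge> 0\<close>, so \<open>c\<^sub>0\<close>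
  maximises \<open>h\<^sub>c(A)\<close>.\<close>

lemma square_sum_le_card_mult_sum_squares:
  fixes x :: "nat \<Rightarrow> 'a::linordered_idom"
  shows "(\<Sum>i<k. x i)\<^sup>2 \<le> of_nat k * (\<Sum>i<k. (x i)\<^sup>2)"
proof -
  have "0 \<le> (\<Sum>i<k. \<Sum>j<k. (x i - x j)\<^sup>2)" by (intro sum_nonneg) auto
  also have "\<dots> = 2 * (of_nat k * (\<Sum>i<k. (x i)\<^sup>2)) - 2 * (\<Sum>i<k. x i)\<^sup>2"
    by (simp add: power2_eq_square algebra_simps sum.distrib sum_subtractf
        sum_distrib_left sum_distrib_right)
  finally show ?thesis by simp
qed

lemma sum_add_nine_minus_card_le:
  fixes x :: "nat \<Rightarrow> int"
  assumes "0 < k" "k \<le> 9" "0 \<le> p" "(\<Sum>i<k. (x i)\<^sup>2) + 9 - int k \<le> p\<^sup>2"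
  shows "(\<Sum>i<k. x i) + (9 - int k) \<le> 3 * p"
proof -
  define T Q d where "T = (\<Sum>i<k. x i)" and "Q = (\<Sum>i<k. (x i)\<^sup>2)" and "d = 9 - int k"
  have "T\<^sup>2 \<le> int k * Q"
    unfolding T_def Q_def by (rule square_sum_le_card_mult_sum_squares)
  moreover have "Q + d \<le> p\<^sup>2" using assms(4) by (simp add: Q_def d_def)
  ultimately have "9 * T\<^sup>2 + 9 * int k * d \<le> 9 * int k * (Q + d)"
    by (simp add: algebra_simps)
  also have "\<dots> \<le> 9 * int k * p\<^sup>2"
    using \<open>Q + d \<le> p\<^sup>2\<close> by (intro mult_left_mono) auto
  also have "\<dots> = int k * (3 * p)\<^sup>2" by (simp add: power_mult_distrib)
  finally have "9 * T\<^sup>2 + 9 * int k * d \<le> int k * (3 * p)\<^sup>2" .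
  moreover have "9 * T\<^sup>2 + 9 * int k * d - int k * (T + d)\<^sup>2 = d * (T - int k)\<^sup>2"
    by (simp add: d_def power2_eq_square algebra_simps)
  moreover have "0 \<le> d * (T - int k)\<^sup>2" using assms(2) by (simp add: d_def)
  ultimately have "int k * (T + d)\<^sup>2 \<le> int k * (3 * p)\<^sup>2" by linarith
  then have "(T + d)\<^sup>2 \<le> (3 * p)\<^sup>2" using assms(1) mult_le_cancel_left_pos[of "int k"] by simp
  then have "T + d \<le> 3 * p" by (rule power2_le_imp_le) (use assms(3) in simp)
  then show ?thesis by (simp add: T_def d_def)
qed

lemma excess_prefix_bound:
  fixes p :: int and x :: "nat \<Rightarrow> int"
  assumes "0 \<le> p" "odd p" "\<forall>i<k. odd (x i) \<and> 0 < x i" "k \<le> 9"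
    and "(\<Sum>i<k. (x i)\<^sup>2) + 9 - int k \<le> p\<^sup>2"
  shows "(\<Sum>i<k. x i - 1) \<le> int (min k 3) * (p - 3)"
proof -
  have excess: "(\<Sum>i<k. x i - 1) = (\<Sum>i<k. x i) - int k"
    by (simp add: sum_subtractf)
  consider "k = 0" | "k = 1" | "k = 2" | "3 \<le> k" by linarith
  then show ?thesis
  proof cases
    case 1
    then show ?thesis by simp
  next
    case 2
    have "(x 0)\<^sup>2 < p\<^sup>2" using assms(5) 2 by simp
    then have "x 0 < p" using assms(1) by (rule power_less_imp_less_base)
    moreover have "even (p - x 0)" using assms(2,3) 2 by simp
    ultimately have "x 0 + 2 \<le> p" by presburger
    then show ?thesis using 2 by simp
  next
    case 3
    have "even (x 0 + x 1)" using assms(3) 3 by auto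
    then obtain m where m: "x 0 + x 1 = 2 * m" by (rule evenE)
    have sum2: "(\<Sum>i<k. f i) = f 0 + f 1" for f :: "nat \<Rightarrow> int"
      using 3 by (simp add: lessThan_nat_numeral)
    have "(x 0 + x 1)\<^sup>2 \<le> 2 * ((x 0)\<^sup>2 + (x 1)\<^sup>2)"
      using square_sum_le_card_mult_sum_squares[of x k] 3 unfolding sum2 by simp
    moreover have "(x 0)\<^sup>2 + (x 1)\<^sup>2 + 7 \<le> p\<^sup>2"
      using assms(5) 3 unfolding sum2 by simp
    ultimately have "2 * m\<^sup>2 + 7 \<le> p\<^sup>2"
      unfolding m by (simp add: power_mult_distrib)
    moreover have "(m + 1)\<^sup>2 < 2 * m\<^sup>2 + 7"
      using zero_le_power2[of "m - 1"] by (simp add: power2_eq_square algebra_simps)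
    ultimately have "(m + 1)\<^sup>2 < p\<^sup>2" by linarith
    then have "m + 1 < p" by (rule power_less_imp_less_base) (use assms(1) in simp)
    then show ?thesis using 3 m excess sum2 by simp
  next
    case 4
    have "(\<Sum>i<k. x i) + (9 - int k) \<le> 3 * p"
      using assms 4 by (intro sum_add_nine_minus_card_le) auto
    then show ?thesis using 4 excess by simp
  qed
qed

lemma sum_mult_antimono_nonneg:
  fixes d b :: "nat \<Rightarrow> 'a::linordered_idom"
  assumes "\<And>k. k \<le> n \<Longrightarrow> 0 \<le> (\<Sum>i<k. d i)" and "antimono b" and "\<And>i. 0 \<le> b i"
  shows "0 \<le> (\<Sum>i<n. d i * b i)"
proof -
  have partial: "(\<Sum>i<k. d i) * b k \<le> (\<Sum>i<k. d i * b i)" if "k \<le> n" for k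
    using that
  proof (induction k)
    case 0
    then show ?case by simp
  next
    case (Suc k)
    have "(\<Sum>i<Suc k. d i) * b (Suc k) \<le> (\<Sum>i<Suc k. d i) * b k"
      using assms(1)[OF Suc.prems] antimonoD[OF assms(2)] by (intro mult_left_mono) auto
    also have "\<dots> = (\<Sum>i<k. d i) * b k + d k * b k"
      by (simp add: algebra_simps)
    also have "\<dots> \<le> (\<Sum>i<Suc k. d i * b i)"
      using Suc by simp
    finally show ?case .
  qed
  have "0 \<le> (\<Sum>i<n. d i) * b n"
    using assms(1,3) by simp
  also have "\<dots> \<le> (\<Sum>i<n. d i * b i)"
    by (rule partial) simp
  finally show ?thesis .
qed

lemma weighted_sum_le_of_prefix_bounds:
  fixes w b :: "nat \<Rightarrow> int"
  assumes "\<And>k. k \<le> n \<Longrightarrow> (\<Sum>i<k. w i) \<le> int (min k 3) * M"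
    and "antimono b" and "\<And>i. 0 \<le> b i" and "0 \<le> M" and "b 0 + b 1 + b 2 \<le> a"
  shows "(\<Sum>i<n. w i * b i) \<le> M * a"
proof -
  define top3 where "top3 i = (if i < 3 then M else 0)" for i :: nat
  have sum_top3: "(\<Sum>i<k. top3 i * f i) = M * (\<Sum>i<min k 3. f i)" for k f
  proof -
    have "(\<Sum>i<k. top3 i * f i) = (\<Sum>i<k. if i < 3 then M * f i else 0)"
      by (rule sum.cong) (simp_all add: top3_def)
    also have "\<dots> = (\<Sum>i \<in> {i \<in> {..<k}. i < 3}. M * f i)"
      by (rule sum.inter_filter[symmetric]) simp
    also have "{i \<in> {..<k}. i < 3} = {..<min k 3}"
      by auto
    finally show ?thesis by (simp add: sum_distrib_left)
  qed
  have "0 \<le> (\<Sum>i<n. (top3 i - w i) * b i)"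
  proof (rule sum_mult_antimono_nonneg[OF _ assms(2,3)])
    fix k assume "k \<le> n"
    then show "0 \<le> (\<Sum>i<k. top3 i - w i)"
      using assms(1)[of k] sum_top3[where f = "\<lambda>_. 1"] by (simp add: sum_subtractf mult.commute)
  qed
  then have "(\<Sum>i<n. w i * b i) \<le> M * (\<Sum>i<min n 3. b i)"
    by (simp add: left_diff_distrib sum_subtractf sum_top3)
  also have "(\<Sum>i<min n 3. b i) \<le> (\<Sum>i<3. b i)"
    using assms(3) by (intro sum_mono2) auto
  also have "\<dots> \<le> a"
    using assms(5) by (simp add: eval_nat_numeral)
  finally show ?thesis using assms(4) by (simp add: mult_left_mono)
qed

lemma odd_weights_pairing_ge:
  fixes p a :: int and x b :: "nat \<Rightarrow> int"
  assumes "0 \<le> p" "odd p" "\<forall>i<n. odd (x i) \<and> 0 < x i" "n \<le> 9"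
    and "(\<Sum>i<n. (x i)\<^sup>2) + 9 - int n \<le> p\<^sup>2"
    and "antimono b" "\<And>i. 0 \<le> b i" "b 0 + b 1 + b 2 \<le> a"
  shows "3 * a - (\<Sum>i<n. b i) \<le> p * a - (\<Sum>i<n. x i * b i)"
proof -
  have prefix: "(\<Sum>i<k. (x i)\<^sup>2) + 9 - int k \<le> p\<^sup>2" if "k \<le> n" for k
  proof -
    have "int (n - k) = (\<Sum>i\<in>{k..<n}. 1)" by simp
    also have "\<dots> \<le> (\<Sum>i\<in>{k..<n}. (x i)\<^sup>2)"
      using assms(3) by (intro sum_mono) (auto intro!: one_le_power)
    finally have "(\<Sum>i<k. (x i)\<^sup>2) + int (n - k) \<le> (\<Sum>i<n. (x i)\<^sup>2)"
      using sum.atLeastLessThan_concat[OF _ that, of 0 "\<lambda>i. (x i)\<^sup>2"]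
      by (simp add: atLeast0LessThan)
    then show ?thesis using assms(5) that by linarith
  qed
  have "3\<^sup>2 \<le> p\<^sup>2" using prefix[of 0] by simp
  then have "3 \<le> p" by (rule power2_le_imp_le) (use assms(1) in simp)
  have "(\<Sum>i<n. (x i - 1) * b i) \<le> (p - 3) * a"
  proof (rule weighted_sum_le_of_prefix_bounds[OF _ assms(6,7) _ assms(8)])
    fix k assume "k \<le> n"
    then show "(\<Sum>i<k. x i - 1) \<le> int (min k 3) * (p - 3)"
      using assms(1-4) prefix by (intro excess_prefix_bound) auto
  qed (use \<open>3 \<le> p\<close> in simp)
  then show ?thesis by (simp add: algebra_simps sum.distrib sum_subtractf)
qed

lemma sum_le_three_mult:
  fixes a :: int and b :: "nat \<Rightarrow> int"
  assumes "n \<le> 9" "antimono b" "\<And>i. 0 \<le> b i" "b 0 + b 1 + b 2 \<le> a"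
  shows "(\<Sum>i<n. b i) \<le> 3 * a"
  using weighted_sum_le_of_prefix_bounds[of n "\<lambda>_. 1" 3, OF _ assms(2,3) _ assms(4)] assms(1)
  by simp

lemma dot_eq_sum:
  assumes "length xs = n" "length ys = n"
  shows "dot (a, xs) (c, ys) = a * c - (\<Sum>i<n. xs ! i * ys ! i)"
  using assms by (simp add: dot_def sum_list_sum_nth atLeast0LessThan)

lemma characteristic_canonical: "characteristic n (3, replicate n 1)"
  unfolding characteristic_def cls_in_def
proof (intro conjI allI impI)
  fix A :: cls
  assume len: "length (snd A) = n"
  obtain a b where A: "A = (a, b)" by fastforce
  have "dot (3, replicate n 1) A - dot A A = (3 * a - a * a) + (\<Sum>i<n. b ! i * b ! i - b ! i)"
    using len by (simp add: A dot_eq_sum sum_subtractf)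
  moreover have "even (3 * a - a * a)" by auto
  moreover have "even (\<Sum>i<n. b ! i * b ! i - b ! i)" by (intro dvd_sum) auto
  ultimately have "even (dot (3, replicate n 1) A - dot A A)" by simp
  then show "dot (3, replicate n 1) A mod 2 = dot A A mod 2"
    by (simp add: mod_eq_dvd_iff)
qed simp

lemma adjunction_class_canonical: "adjunction_class n (3, replicate n 1)"
  using characteristic_canonical by (simp add: adjunction_class_def dot_eq_sum signature_def)

lemma characteristic_odd_coeffs:
  assumes "characteristic n (al, be)"
  shows "odd al" and "\<forall>i<n. odd (be ! i)"
proof -
  have len: "length be = n" and parity: "\<And>A. cls_in n A \<Longrightarrow> dot (al, be) A mod 2 = dot A A mod 2"
    using assms by (auto simp: characteristic_def cls_in_def)
  have "dot (al, be) (1, replicate n 0) mod 2 = dot (1, replicate n 0) (1, replicate n 0) mod 2"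
    by (rule parity) (simp add: cls_in_def)
  then show "odd al" using len by (simp add: dot_eq_sum mod2_eq_if split: if_splits)
  show "\<forall>i<n. odd (be ! i)"
  proof (intro allI impI)
    fix i assume i: "i < n"
    define e where "e = (replicate n (0::int))[i := 1]"
    have e_nth: "j < n \<Longrightarrow> e ! j = (if j = i then 1 else 0)" for j
      using i by (simp add: e_def nth_list_update)
    have e_len: "length e = n" by (simp add: e_def)
    have "(\<Sum>j<n. be ! j * e ! j) = (\<Sum>j<n. if j = i then be ! i else 0)"
      by (rule sum.cong) (simp_all add: e_nth)
    moreover have "(\<Sum>j<n. e ! j * e ! j) = (\<Sum>j<n. if j = i then 1 else 0)"
      by (rule sum.cong) (simp_all add: e_nth)
    ultimately have "dot (al, be) (0, e) = - be ! i" and "dot (0, e) (0, e) = -1"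
      using len e_len i by (simp_all add: dot_eq_sum)
    moreover have "dot (al, be) (0, e) mod 2 = dot (0, e) (0, e) mod 2"
      by (rule parity) (simp add: cls_in_def e_len)
    ultimately show "odd (be ! i)" by presburger
  qed
qed

lemma odd_square_mod_8: "odd (x :: int) \<Longrightarrow> 8 dvd x\<^sup>2 - 1"
proof -
  assume "odd x"
  then obtain k where "x = 2 * k + 1" by (rule oddE)
  then have "x\<^sup>2 - 1 = 4 * (k * (k + 1))" by (simp add: power2_eq_square algebra_simps)
  moreover have "even (k * (k + 1))" by simp
  ultimately show ?thesis by fastforce
qed

lemma adjunction_class_square_bound:
  assumes "adjunction_class n (al, be)"
  shows "(\<Sum>i<n. (be ! i)\<^sup>2) + 9 - int n \<le> al\<^sup>2"
proof -
  have char: "characteristic n (al, be)" and pos: "1 - int n < dot (al, be) (al, be)"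
    using assms by (auto simp: adjunction_class_def signature_def)
  have len: "length be = n" using char by (simp add: characteristic_def cls_in_def)
  \<comment> \<open>\<open>c\<cdot>c - \<sigma>\<close> is a sum of terms \<open>\<plusminus>(x\<^sup>2 - 1)\<close> with \<open>x\<close> odd.\<close>
  have excess: "dot (al, be) (al, be) - (1 - int n) = (al\<^sup>2 - 1) - (\<Sum>i<n. (be ! i)\<^sup>2 - 1)"
    using len by (simp add: dot_eq_sum sum_subtractf power2_eq_square)
  have "8 dvd (al\<^sup>2 - 1) - (\<Sum>i<n. (be ! i)\<^sup>2 - 1)"
    using characteristic_odd_coeffs[OF char]
    by (intro dvd_diff dvd_sum odd_square_mod_8) auto
  then have "8 \<le> dot (al, be) (al, be) - (1 - int n)"
    unfolding excess[symmetric] using pos by (intro zdvd_imp_le) auto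
  then show ?thesis using excess by (simp add: sum_subtractf)
qed

text \<open>Padding \<open>b\<close> with zeros lets the conditions \<open>a \<ge> b\<^sub>1 (+ b\<^sub>2 (+ b\<^sub>3))\<close> for
  \<open>n < 3\<close> be read uniformly as \<open>a \<ge> b\<^sub>1 + b\<^sub>2 + b\<^sub>3\<close>.\<close>

lemma reduced_padded_coeffs:
  assumes "reduced n (a, b)"
  defines "b' \<equiv> nth_default 0 b"
  shows "antimono b'" and "\<And>i. 0 \<le> b' i" and "b' 0 + b' 1 + b' 2 \<le> a"
proof -
  have len: "length b = n" and sorted: "sorted_wrt (\<ge>) b" and nonneg: "\<forall>x\<in>set b. 0 \<le> x"
    and top: "if n = 0 then 0 \<le> a else if n = 1 then b ! 0 \<le> a
              else if n = 2 then b ! 0 + b ! 1 \<le> a else b ! 0 + b ! 1 + b ! 2 \<le> a"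
    using assms(1) by (auto simp: reduced_def cls_in_def Let_def)
  show b'_nonneg: "0 \<le> b' i" for i
    using nonneg by (auto simp: b'_def nth_default_def)
  show "antimono b'"
  proof (rule antimonoI)
    fix i j :: nat assume "i \<le> j"
    then show "b' j \<le> b' i"
      using sorted b'_nonneg[of i]
      by (cases "j < length b") (auto simp: b'_def nth_default_def sorted_wrt_iff_nth_less le_less)
  qed
  consider "n = 0" | "n = 1" | "n = 2" | "3 \<le> n" by linarith
  then show "b' 0 + b' 1 + b' 2 \<le> a"
    using top len by cases (auto simp: b'_def nth_default_def)
qed

lemma canonical_pairing_nonneg:
  assumes "n \<le> 9" and "reduced n (a, b)"
  shows "0 \<le> dot (3, replicate n 1) (a, b)"
proof -
  have len: "length b = n" using assms(2) by (simp add: reduced_def cls_in_def)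
  have "(\<Sum>i<n. replicate n 1 ! i * b ! i) = (\<Sum>i<n. nth_default 0 b i)"
    using len by (intro sum.cong) (auto simp: nth_default_nth)
  then have "dot (3, replicate n 1) (a, b) = 3 * a - (\<Sum>i<n. nth_default 0 b i)"
    using len by (simp add: dot_eq_sum)
  then show ?thesis
    using sum_le_three_mult[OF assms(1) reduced_padded_coeffs[OF assms(2)]] by simp
qed

lemma canonical_pairing_le_abs_pairing:
  assumes "n \<le> 9" and "reduced n (a, b)" and "adjunction_class n c"
  shows "dot (3, replicate n 1) (a, b) \<le> \<bar>dot c (a, b)\<bar>"
proof -
  obtain al be where c: "c = (al, be)" by fastforce
  define b' where "b' = nth_default 0 b"
  note coeffs = reduced_padded_coeffs[OF assms(2), folded b'_def]
  have len: "length b = n" using assms(2) by (simp add: reduced_def cls_in_def)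
  have char: "characteristic n (al, be)" using assms(3) by (simp add: c adjunction_class_def)
  then have len_be: "length be = n" by (simp add: characteristic_def cls_in_def)
  have "0 \<le> a" using coeffs(2)[of 0] coeffs(2)[of 1] coeffs(2)[of 2] coeffs(3) by linarith
  have "(\<Sum>i<n. be ! i * b ! i) = (\<Sum>i<n. be ! i * b' i)"
    using len by (intro sum.cong) (auto simp: b'_def nth_default_nth)
  then have dot_c: "dot c (a, b) = al * a - (\<Sum>i<n. be ! i * b' i)"
    using len len_be by (simp add: c dot_eq_sum)
  have "(\<Sum>i<n. replicate n 1 ! i * b ! i) = (\<Sum>i<n. b' i)"
    using len by (intro sum.cong) (auto simp: b'_def nth_default_nth)
  then have dot_c0: "dot (3, replicate n 1) (a, b) = 3 * a - (\<Sum>i<n. b' i)"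
    using len by (simp add: dot_eq_sum)
  have "\<bar>al\<bar> * a - (\<Sum>i<n. \<bar>be ! i\<bar> * b' i) \<le> \<bar>dot c (a, b)\<bar>"
  proof -
    have "\<bar>\<Sum>i<n. be ! i * b' i\<bar> \<le> (\<Sum>i<n. \<bar>be ! i\<bar> * b' i)"
      using sum_abs[of "\<lambda>i. be ! i * b' i" "{..<n}"] coeffs(2) by (simp add: abs_mult)
    moreover have "\<bar>al * a\<bar> = \<bar>al\<bar> * a" using \<open>0 \<le> a\<close> by (simp add: abs_mult)
    ultimately show ?thesis unfolding dot_c by linarith
  qed
  moreover have "3 * a - (\<Sum>i<n. b' i) \<le> \<bar>al\<bar> * a - (\<Sum>i<n. \<bar>be ! i\<bar> * b' i)"
    using characteristic_odd_coeffs[OF char] adjunction_class_square_bound[OF assms(3)[unfolded c]]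
    by (intro odd_weights_pairing_ge[OF _ _ _ assms(1) _ coeffs]) (auto simp: odd_pos)
  ultimately show ?thesis unfolding dot_c0 by linarith
qed

lemma h_eq_h_c_canonical:
  assumes "n \<le> 9" and "reduced n (a, b)"
  shows "h n (a, b) = h_c n (3, replicate n 1) (a, b)"
  unfolding h_def
proof (rule cSup_eq_maximum)
  show "h_c n (3, replicate n 1) (a, b) \<in> {h_c n c (a, b) |c. adjunction_class n c}"
    using adjunction_class_canonical by blast
next
  fix y assume "y \<in> {h_c n c (a, b) |c. adjunction_class n c}"
  then obtain c where c: "adjunction_class n c" and y: "y = h_c n c (a, b)" by blast
  have "0 \<le> dot (3, replicate n 1) (a, b)"
    using assms by (rule canonical_pairing_nonneg)
  moreover have "dot (3, replicate n 1) (a, b) \<le> \<bar>dot c (a, b)\<bar>"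
    using assms c by (rule canonical_pairing_le_abs_pairing)
  ultimately show "y \<le> h_c n (3, replicate n 1) (a, b)"
    unfolding y h_c_def by (auto intro: zdiv_mono1)
qed

lemma h_c_canonical_eq:
  assumes "length b = n" and "(a, b) \<noteq> zero_cls n" and "0 \<le> dot (3, replicate n 1) (a, b)"
  shows "2 * h_c n (3, replicate n 1) (a, b) = (a - 1) * (a - 2) - (\<Sum>x\<leftarrow>b. x * (x - 1))"
proof -
  define X where "X = dot (a, b) (a, b) - dot (3, replicate n 1) (a, b)"
  have sum_b: "(\<Sum>x\<leftarrow>b. f x) = (\<Sum>i<n. f (b ! i))" for f :: "int \<Rightarrow> int"
    using assms(1) by (simp add: sum_list_sum_nth atLeast0LessThan)
  have X: "X = a * a - 3 * a - (\<Sum>x\<leftarrow>b. x * (x - 1))"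
    using assms(1) by (simp add: X_def dot_eq_sum sum_b sum_subtractf algebra_simps)
  moreover have "even (\<Sum>x\<leftarrow>b. x * (x - 1))"
    unfolding sum_b by (intro dvd_sum) auto
  ultimately have "2 * (X div 2) = X" by simp
  moreover have "h_c n (3, replicate n 1) (a, b) = 1 + X div 2"
    using assms(2,3) by (simp add: h_c_def X_def)
  ultimately show ?thesis
    using X by (simp add: algebra_simps)
qed

lemma gbinomial_two: "(x :: 'a :: field_char_0) gchoose 2 = x * (x - 1) / 2"
  by (simp add: gbinomial_Suc numeral_2_eq_2)

theorem mainTheorem9:
  fixes n :: nat and a :: int and b :: "int list"
  assumes "n \<le> 9"
    and "length b = n"
    and "(a, b) \<noteq> zero_cls n"
    and "reduced n (a, b)"
    and "dot (a, b) (a, b) \<ge> 0"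
  shows "adjunction_class n (3, replicate n 1)
    \<and> h n (a, b) = h_c n (3, replicate n 1) (a, b)
    \<and> real_of_int (h_c n (3, replicate n 1) (a, b))
        = ((real_of_int a - 1) * (real_of_int a - 2)
           - (\<Sum>x\<leftarrow>b. real_of_int x * (real_of_int x - 1))) / 2
    \<and> real_of_int (h_c n (3, replicate n 1) (a, b))
        = ((real_of_int a - 1) gchoose 2) - (\<Sum>x\<leftarrow>b. real_of_int x gchoose 2)"
proof -
  have int_formula: "2 * h_c n (3, replicate n 1) (a, b) = (a - 1) * (a - 2) - (\<Sum>x\<leftarrow>b. x * (x - 1))"
    using assms(2,3) canonical_pairing_nonneg[OF assms(1,4)] by (rule h_c_canonical_eq)
  have "2 * real_of_int (h_c n (3, replicate n 1) (a, b))
      = (real_of_int a - 1) * (real_of_int a - 2) - real_of_int (\<Sum>x\<leftarrow>b. x * (x - 1))"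
    using arg_cong[OF int_formula, of real_of_int] by simp
  moreover have "real_of_int (\<Sum>x\<leftarrow>b. x * (x - 1)) = (\<Sum>x\<leftarrow>b. real_of_int x * (real_of_int x - 1))"
    by (induction b) simp_all
  moreover have "(\<Sum>x\<leftarrow>b. real_of_int x gchoose 2) = (\<Sum>x\<leftarrow>b. real_of_int x * (real_of_int x - 1)) / 2"
    by (induction b) (simp_all add: gbinomial_two add_divide_distrib)
  ultimately show ?thesis
    using adjunction_class_canonical h_eq_h_c_canonical[OF assms(1,4)]
    by (simp add: gbinomial_two diff_divide_distrib)
qed

end
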